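(* Let $f:\mathbb{R}^n\to\mathbb{R}$ be bounded below and continuously differentiable with $\nabla f$ Lipschitz with constant $L_{\nabla f}$, and let $\tilde f:\mathbb{R}^n\to\mathbb{R}$ satisfy $|\tilde f(z)-f(z)|\le\epsilon_f$ for all $z\in\mathbb{R}^n$, for some $\epsilon_f>0$. Let $x\in\mathbb{R}^n$, $\Delta>0$, $p=n+1$, points $y_1,\ldots,y_p$ with $\|y_i-x\|\le\beta\Delta$ for some $\beta>0$ and all $i$, and let $\hat M\in\mathbb{R}^{p\times p}$ with rows $[1,((y_i-x)/\Delta)^T]$ be invertible. Define $c,g$ by $\hat M\begin{bmatrix}c\\ \Delta g\end{bmatrix}=\begin{bmatrix}\tilde f(y_1)\\ \vdots\\ \tilde f(y_p)\end{bmatrix}$ and $m(y)=c+g^T(y-x)$. Then for all $y\in B(x,\Delta)$, $$|m(y)-f(y)|\le\kappa_{\mathrm{mf}}\Delta^2+\tilde\kappa_{\mathrm{mf}}\epsilon_f,\qquad \|\nabla m(y)-\nabla f(y)\|\le\kappa_{\mathrm{mg}}\Delta+\tilde\kappa_{\mathrm{mg}}\frac{\epsilon_f}{\Delta},$$ where $\kappa_{\mathrm{mf}}=\frac{L_{\nabla f}}{2}(1+\sqrt n)\beta^2\|\hat M^{-1}\|_\infty+\frac{L_{\nabla f}}{2}$, $\kappa_{\mathrm{mg}}=2\kappa_{\mathrm{mf}}$, $\tilde\kappa_{\mathrm{mf}}=(1+\sqrt n)\|\hat M^{-1}\|_\infty$ and $\tilde\kappa_{\mathrm{mg}}=2\t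ilde\kappa_{\mathrm{mf}}$.
   Context: $\|A\|_\infty$ is the maximum absolute row sum; other norms Euclidean; $B(x,\Delta)=\{y:\|y-x\|\le\Delta\}$. *)

theory Defs
  imports "HOL-Analysis.Analysis"
begin

definition mat_norm_inf :: "real ^ 'c ^ 'r \<Rightarrow> real" where
  "mat_norm_inf A = Max (range (\<lambda>i. \<Sum>j\<in>UNIV. \<bar>A $ i $ j\<bar>))"

text \<open>The interpolation matrix with rows [1, ((y_i - x)/Delta)^T]; rows and columns indexed
  by the type 'n option, which has n+1 elements (None = the constant column).\<close>
definition interp_mat :: "real ^ 'n \<Rightarrow> real \<Rightarrow> ('n option \<Rightarrow> real ^ 'n) \<Rightarrow> real ^ 'n option ^ 'n option" where
  "interp_mat x \<Delta> y = (\<chi> i k. case k of None \<Rightarrow> 1 | Some j \<Rightarrow> (y i - x) $ j / \<Delta>)"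

end

theory Submission
  imports Defs
begin

(* Since the interpolation matrix reproduces the linear Taylor model of f at x exactly, the
  coefficient error (c - f x, \<Delta> (g - \<nabla>f x)) solves the interpolation system with right-hand side
  r\<^sub>i = ft(y\<^sub>i) - f(x) - \<nabla>f(x)\<^sup>T (y\<^sub>i - x). The descent lemma
  |f b - f a - \<nabla>f(a)\<^sup>T (b - a)| \<le> L/2 |b - a|\<^sup>2 bounds every |r\<^sub>i| by \<epsilon>f + L/2 \<beta>\<^sup>2 \<Delta>\<^sup>2, so the
  coefficient error is at most |M\<^sup>-\<^sup>1|\<^sub>\<infinity> times this in the max-norm; the factor \<surd>n comes from
  passing from the max-norm to the Euclidean norm of the gradient error. Comparing m with the
  Taylor model at x on B(x, \<Delta>), once more via the descent lemma, gives both estimates. *)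

lemma first_order_remainder_le:
  fixes f :: "'a::real_inner \<Rightarrow> real" and grad :: "'a \<Rightarrow> 'a"
  assumes deriv: "\<And>z. (f has_derivative (\<lambda>h. grad z \<bullet> h)) (at z)"
    and lip: "\<And>u v. norm (grad u - grad v) \<le> L * norm (u - v)"
  shows "f b - f a - grad a \<bullet> (b - a) \<le> L / 2 * (norm (b - a))\<^sup>2"
proof -
  define h where "h = b - a"
  define \<phi> where "\<phi> t = f (a + t *\<^sub>R h) - t * (grad a \<bullet> h) - L / 2 * t\<^sup>2 * (norm h)\<^sup>2" for t
  have f_line: "((\<lambda>t. f (a + t *\<^sub>R h)) has_real_derivative grad (a + t *\<^sub>R h) \<bullet> h) (at t)" for t
  proof -
    have "((\<lambda>t. a + t *\<^sub>R h) has_derivative (\<lambda>t. t *\<^sub>R h)) (at t)"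
      by (auto intro!: derivative_eq_intros)
    from has_derivative_compose[OF this deriv] show ?thesis
      by (rule has_derivative_imp_has_field_derivative) simp
  qed
  have "\<phi> 1 \<le> \<phi> 0"
  proof (rule DERIV_nonpos_imp_nonincreasing[of 0 1], simp)
    fix t :: real assume "0 \<le> t"
    have "(grad (a + t *\<^sub>R h) - grad a) \<bullet> h \<le> norm (grad (a + t *\<^sub>R h) - grad a) * norm h"
      by (rule norm_cauchy_schwarz)
    also have "\<dots> \<le> L * norm (t *\<^sub>R h) * norm h"
      using lip[of "a + t *\<^sub>R h" a] by (intro mult_right_mono) auto
    also have "\<dots> = L * t * (norm h)\<^sup>2"
      using \<open>0 \<le> t\<close> by (simp add: power2_eq_square)
    finally have "grad (a + t *\<^sub>R h) \<bullet> h - grad a \<bullet> h - L * t * (norm h)\<^sup>2 \<le> 0"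
      by (simp add: inner_diff_left)
    moreover have "(\<phi> has_real_derivative
        grad (a + t *\<^sub>R h) \<bullet> h - grad a \<bullet> h - L * t * (norm h)\<^sup>2) (at t)"
      unfolding \<phi>_def by (rule derivative_eq_intros f_line refl | simp)+
    ultimately show "\<exists>d. (\<phi> has_real_derivative d) (at t) \<and> d \<le> 0" by blast
  qed
  then show ?thesis by (simp add: \<phi>_def h_def)
qed

lemma abs_first_order_remainder_le:
  fixes f :: "'a::real_inner \<Rightarrow> real" and grad :: "'a \<Rightarrow> 'a"
  assumes deriv: "\<And>z. (f has_derivative (\<lambda>h. grad z \<bullet> h)) (at z)"
    and lip: "\<And>u v. norm (grad u - grad v) \<le> L * norm (u - v)"
  shows "\<bar>f b - f a - grad a \<bullet> (b - a)\<bar> \<le> L / 2 * (norm (b - a))\<^sup>2"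
proof -
  have "(\<lambda>z. - f z) b - (\<lambda>z. - f z) a - (- grad a) \<bullet> (b - a) \<le> L / 2 * (norm (b - a))\<^sup>2"
  proof (rule first_order_remainder_le)
    show "((\<lambda>z. - f z) has_derivative (\<lambda>h. - grad z \<bullet> h)) (at z)" for z
      using has_derivative_minus[OF deriv] by simp
    show "norm (- grad u - - grad v) \<le> L * norm (u - v)" for u v
      using lip[of u v] by (simp add: norm_minus_commute)
  qed
  with first_order_remainder_le[OF deriv lip, of b a] show ?thesis
    unfolding abs_le_iff by simp
qed

lemma infnorm_le_cart:
  fixes v :: "real ^ 'n"
  assumes "\<And>i. \<bar>v $ i\<bar> \<le> B"
  shows "infnorm v \<le> B"
  unfolding infnorm_cart using assms by (intro cSup_least) auto

lemma norm_le_sqrt_card_infnorm: "norm (v :: real ^ 'n) \<le> sqrt (real CARD('n)) * infnorm v"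
  using norm_le_infnorm[of v] by simp

lemma mat_norm_inf_nonneg: "0 \<le> mat_norm_inf A"
proof -
  have "(\<Sum>j\<in>UNIV. \<bar>A $ i $ j\<bar>) \<le> mat_norm_inf A" for i
    unfolding mat_norm_inf_def by (intro Max_ge) auto
  moreover have "0 \<le> (\<Sum>j\<in>UNIV. \<bar>A $ i $ j\<bar>)" for i
    by (intro sum_nonneg) auto
  ultimately show ?thesis by (meson order_trans)
qed

lemma infnorm_matrix_vector_mult_le:
  fixes A :: "real ^ 'c ^ 'r"
  shows "infnorm (A *v v) \<le> mat_norm_inf A * infnorm v"
proof (rule infnorm_le_cart)
  fix i
  have "\<bar>(A *v v) $ i\<bar> \<le> (\<Sum>j\<in>UNIV. \<bar>A $ i $ j\<bar> * \<bar>v $ j\<bar>)"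
    unfolding matrix_vector_mult_def by (simp add: abs_mult order_trans[OF sum_abs])
  also have "\<dots> \<le> (\<Sum>j\<in>UNIV. \<bar>A $ i $ j\<bar>) * infnorm v"
    unfolding sum_distrib_right
    by (intro sum_mono mult_left_mono component_le_infnorm_cart) auto
  also have "\<dots> \<le> mat_norm_inf A * infnorm v"
    unfolding mat_norm_inf_def by (intro mult_right_mono Max_ge infnorm_pos_le) auto
  finally show "\<bar>(A *v v) $ i\<bar> \<le> mat_norm_inf A * infnorm v" .
qed

lemma matrix_inv_mult_vec:
  fixes A :: "'a::field ^ 'n ^ 'm"
  assumes "invertible A"
  shows "matrix_inv A *v (A *v v) = v"
proof -
  have "matrix_inv A ** A = mat 1"
    using assms unfolding invertible_def matrix_inv_def by (rule someI2_ex) auto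
  then show ?thesis by (metis matrix_vector_mul_assoc matrix_vector_mul_lid)
qed

definition scaled_coeffs :: "real \<Rightarrow> real \<Rightarrow> real ^ 'n \<Rightarrow> real ^ 'n option" where
  "scaled_coeffs \<Delta> a v = (\<chi> k. case k of None \<Rightarrow> a | Some j \<Rightarrow> \<Delta> * v $ j)"

lemma scaled_coeffs_nth [simp]:
  "scaled_coeffs \<Delta> a v $ None = a"
  "scaled_coeffs \<Delta> a v $ Some j = \<Delta> * v $ j"
  by (simp_all add: scaled_coeffs_def)

lemma scaled_coeffs_diff:
  "scaled_coeffs \<Delta> a v - scaled_coeffs \<Delta> b w = scaled_coeffs \<Delta> (a - b) (v - w)"
  by (simp add: vec_eq_iff scaled_coeffs_def right_diff_distrib split: option.split)

lemma sum_UNIV_option: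
  fixes h :: "'a::finite option \<Rightarrow> 'b::comm_monoid_add"
  shows "(\<Sum>k\<in>UNIV. h k) = h None + (\<Sum>j\<in>UNIV. h (Some j))"
  by (simp add: UNIV_option_conv sum.reindex)

lemma interp_mat_mult_scaled_coeffs:
  assumes "\<Delta> \<noteq> 0"
  shows "interp_mat x \<Delta> y *v scaled_coeffs \<Delta> a v = (\<chi> i. a + v \<bullet> (y i - x))"
  using assms
  by (simp add: vec_eq_iff matrix_vector_mult_def interp_mat_def sum_UNIV_option inner_vec_def
      mult.commute)

lemma interp_coeff_error:
  fixes f ft :: "real ^ 'n \<Rightarrow> real" and grad :: "real ^ 'n \<Rightarrow> real ^ 'n"
    and y :: "'n option \<Rightarrow> real ^ 'n"
  assumes deriv: "\<And>z. (f has_derivative (\<lambda>h. grad z \<bullet> h)) (at z)"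
    and lip: "\<And>u v. norm (grad u - grad v) \<le> L * norm (u - v)" and "0 \<le> L"
    and approx: "\<And>z. \<bar>ft z - f z\<bar> \<le> \<epsilon>f"
    and "\<Delta> > 0"
    and poised: "\<And>i. norm (y i - x) \<le> \<beta> * \<Delta>"
    and inv: "invertible (interp_mat x \<Delta> y)"
    and solve: "interp_mat x \<Delta> y *v scaled_coeffs \<Delta> c g = (\<chi> i. ft (y i))"
  defines "E \<equiv> mat_norm_inf (matrix_inv (interp_mat x \<Delta> y)) * (\<epsilon>f + L / 2 * (\<beta> * \<Delta>)\<^sup>2)"
  shows "\<bar>c - f x\<bar> \<le> E" and "norm (g - grad x) \<le> sqrt (real CARD('n)) * E / \<Delta>"
proof -
  define M where "M = interp_mat x \<Delta> y"
  define r where "r = (\<chi> i. ft (y i) - (f x + grad x \<bullet> (y i - x)))"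
  have residual: "infnorm r \<le> \<epsilon>f + L / 2 * (\<beta> * \<Delta>)\<^sup>2"
  proof (rule infnorm_le_cart)
    fix i
    have "\<bar>f (y i) - f x - grad x \<bullet> (y i - x)\<bar> \<le> L / 2 * (norm (y i - x))\<^sup>2"
      by (rule abs_first_order_remainder_le[OF deriv lip])
    also have "\<dots> \<le> L / 2 * (\<beta> * \<Delta>)\<^sup>2"
      using poised[of i] \<open>0 \<le> L\<close> by (intro mult_left_mono power_mono) auto
    moreover have "r $ i = (ft (y i) - f (y i)) + (f (y i) - f x - grad x \<bullet> (y i - x))"
      by (simp add: r_def)
    ultimately show "\<bar>r $ i\<bar> \<le> \<epsilon>f + L / 2 * (\<beta> * \<Delta>)\<^sup>2"
      using approx[of "y i"] by linarith
  qed
  have "M *v scaled_coeffs \<Delta> (c - f x) (g - grad x) = r"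
    using solve interp_mat_mult_scaled_coeffs[of \<Delta> x y "f x" "grad x"] \<open>\<Delta> > 0\<close>
    by (simp add: M_def r_def scaled_coeffs_diff[symmetric] matrix_vector_mult_diff_distrib
        vec_eq_iff)
  then have coeff_error: "scaled_coeffs \<Delta> (c - f x) (g - grad x) = matrix_inv M *v r"
    using matrix_inv_mult_vec[OF inv[folded M_def]] by metis
  have coeff_bound: "infnorm (scaled_coeffs \<Delta> (c - f x) (g - grad x)) \<le> E"
  proof -
    have "infnorm (scaled_coeffs \<Delta> (c - f x) (g - grad x)) \<le> mat_norm_inf (matrix_inv M) * infnorm r"
      unfolding coeff_error by (rule infnorm_matrix_vector_mult_le)
    also have "\<dots> \<le> E"
      unfolding E_def M_def by (intro mult_left_mono residual mat_norm_inf_nonneg)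
    finally show ?thesis .
  qed
  then show "\<bar>c - f x\<bar> \<le> E"
    using component_le_infnorm_cart[of "scaled_coeffs \<Delta> (c - f x) (g - grad x)" None] by simp
  have "infnorm (g - grad x) \<le> E / \<Delta>"
  proof (rule infnorm_le_cart)
    fix j
    have "\<Delta> * \<bar>(g - grad x) $ j\<bar> \<le> E"
      using component_le_infnorm_cart[of "scaled_coeffs \<Delta> (c - f x) (g - grad x)" "Some j"] coeff_bound
        \<open>\<Delta> > 0\<close>
      by (simp add: abs_mult)
    then show "\<bar>(g - grad x) $ j\<bar> \<le> E / \<Delta>"
      using \<open>\<Delta> > 0\<close> by (simp add: field_simps)
  qed
  then have "sqrt (real CARD('n)) * infnorm (g - grad x) \<le> sqrt (real CARD('n)) * (E / \<Delta>)"
    by (rule mult_left_mono) simp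
  then show "norm (g - grad x) \<le> sqrt (real CARD('n)) * E / \<Delta>"
    using norm_le_sqrt_card_infnorm[of "g - grad x"] by simp
qed

lemma affine_model_error:
  fixes f :: "'a::real_inner \<Rightarrow> real" and grad :: "'a \<Rightarrow> 'a"
  assumes deriv: "\<And>z. (f has_derivative (\<lambda>h. grad z \<bullet> h)) (at z)"
    and lip: "\<And>u v. norm (grad u - grad v) \<le> L * norm (u - v)" and "0 \<le> L"
    and value_error: "\<bar>c - f x\<bar> \<le> e\<^sub>0" and grad_error: "norm (g - grad x) \<le> e\<^sub>1"
    and "norm (z - x) \<le> \<Delta>"
  shows "\<bar>c + g \<bullet> (z - x) - f z\<bar> \<le> e\<^sub>0 + e\<^sub>1 * \<Delta> + L / 2 * \<Delta>\<^sup>2"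
    and "norm (g - grad z) \<le> e\<^sub>1 + L * \<Delta>"
proof -
  have "\<bar>(g - grad x) \<bullet> (z - x)\<bar> \<le> norm (g - grad x) * norm (z - x)"
    by (rule Cauchy_Schwarz_ineq2)
  also have "\<dots> \<le> e\<^sub>1 * \<Delta>"
    using grad_error \<open>norm (z - x) \<le> \<Delta>\<close>
    by (intro mult_mono) (auto intro: order_trans[OF norm_ge_zero])
  finally have slope_term: "\<bar>(g - grad x) \<bullet> (z - x)\<bar> \<le> e\<^sub>1 * \<Delta>" .
  have "\<bar>f z - f x - grad x \<bullet> (z - x)\<bar> \<le> L / 2 * (norm (z - x))\<^sup>2"
    by (rule abs_first_order_remainder_le[OF deriv lip])
  also have "\<dots> \<le> L / 2 * \<Delta>\<^sup>2"
    using \<open>norm (z - x) \<le> \<Delta>\<close> \<open>0 \<le> L\<close> by (intro mult_left_mono power_mono) auto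
  finally have remainder: "\<bar>f z - f x - grad x \<bullet> (z - x)\<bar> \<le> L / 2 * \<Delta>\<^sup>2" .
  have "c + g \<bullet> (z - x) - f z
      = (c - f x) + (g - grad x) \<bullet> (z - x) - (f z - f x - grad x \<bullet> (z - x))"
    by (simp add: inner_diff_left)
  then show "\<bar>c + g \<bullet> (z - x) - f z\<bar> \<le> e\<^sub>0 + e\<^sub>1 * \<Delta> + L / 2 * \<Delta>\<^sup>2"
    using value_error slope_term remainder by linarith
  have "norm (grad x - grad z) \<le> L * \<Delta>"
    using lip[of x z] \<open>norm (z - x) \<le> \<Delta>\<close> \<open>0 \<le> L\<close>
    by (metis mult_left_mono norm_minus_commute order_trans)
  then show "norm (g - grad z) \<le> e\<^sub>1 + L * \<Delta>"
    using norm_triangle_ineq[of "g - grad x" "grad x - grad z"] grad_error by simp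
qed

theorem theorem8p3:
  fixes f ft :: "real ^ 'n \<Rightarrow> real"
    and grad :: "real ^ 'n \<Rightarrow> real ^ 'n"
    and L \<epsilon>f \<Delta> \<beta> c :: real
    and x g :: "real ^ 'n"
    and y :: "'n option \<Rightarrow> real ^ 'n"
  assumes bdd_below: "\<exists>b. \<forall>z. b \<le> f z"
    and deriv: "\<And>z. (f has_derivative (\<lambda>h. grad z \<bullet> h)) (at z)"
    and grad_cont: "continuous_on UNIV grad"
    and lip: "\<And>u v. norm (grad u - grad v) \<le> L * norm (u - v)"
    and eps_pos: "\<epsilon>f > 0"
    and approx: "\<And>z. \<bar>ft z - f z\<bar> \<le> \<epsilon>f"
    and Delta_pos: "\<Delta> > 0"
    and beta_pos: "\<beta> > 0"
    and poised: "\<And>i. norm (y i - x) \<le> \<beta> * \<Delta>"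
    and inv: "invertible (interp_mat x \<Delta> y)"
    and solve: "interp_mat x \<Delta> y *v (\<chi> k. case k of None \<Rightarrow> c | Some j \<Rightarrow> \<Delta> * g $ j)
                  = (\<chi> i. ft (y i))"
  shows "\<forall>z \<in> cball x \<Delta>.
     \<bar>(c + g \<bullet> (z - x)) - f z\<bar>
        \<le> (L / 2 * (1 + sqrt (real CARD('n))) * \<beta>\<^sup>2 * mat_norm_inf (matrix_inv (interp_mat x \<Delta> y)) + L / 2) * \<Delta>\<^sup>2
          + ((1 + sqrt (real CARD('n))) * mat_norm_inf (matrix_inv (interp_mat x \<Delta> y))) * \<epsilon>f
   \<and> norm (g - grad z)
        \<le> 2 * (L / 2 * (1 + sqrt (real CARD('n))) * \<beta>\<^sup>2 * mat_norm_inf (matrix_inv (interp_mat x \<Delta> y)) + L / 2) * \<Delta>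
          + 2 * ((1 + sqrt (real CARD('n))) * mat_norm_inf (matrix_inv (interp_mat x \<Delta> y))) * (\<epsilon>f / \<Delta>)"
proof -
  have "0 \<le> L * norm (1 :: real ^ 'n)"
    using order_trans[OF norm_ge_zero lip[of 1 0]] by simp
  moreover have "(1 :: real ^ 'n) \<noteq> 0" by (simp add: vec_eq_iff)
  ultimately have "0 \<le> L" by (simp add: zero_le_mult_iff)
  define K where "K = mat_norm_inf (matrix_inv (interp_mat x \<Delta> y))"
  define E where "E = K * (\<epsilon>f + L / 2 * (\<beta> * \<Delta>)\<^sup>2)"
  define sn where "sn = sqrt (real CARD('n))"
  have "0 \<le> E"
    unfolding E_def K_def using eps_pos \<open>0 \<le> L\<close> by (intro mult_nonneg_nonneg mat_norm_inf_nonneg) auto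
  note coeff_errors = interp_coeff_error[OF deriv lip \<open>0 \<le> L\<close> approx Delta_pos poised inv
      solve[folded scaled_coeffs_def], folded K_def, folded E_def sn_def]
  have "E + sn * E / \<Delta> * \<Delta> + L / 2 * \<Delta>\<^sup>2
      = (L / 2 * (1 + sn) * \<beta>\<^sup>2 * K + L / 2) * \<Delta>\<^sup>2 + ((1 + sn) * K) * \<epsilon>f"
    using Delta_pos by (simp add: E_def field_simps power2_eq_square)
  moreover have "sn * E / \<Delta> + L * \<Delta>
      \<le> 2 * (L / 2 * (1 + sn) * \<beta>\<^sup>2 * K + L / 2) * \<Delta> + 2 * ((1 + sn) * K) * (\<epsilon>f / \<Delta>)"
  proof -
    have "sn * E / \<Delta> \<le> 2 * (1 + sn) * E / \<Delta>"
      using Delta_pos \<open>0 \<le> E\<close> by (intro divide_right_mono mult_right_mono) (auto simp: sn_def)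
    also have "2 * (1 + sn) * E / \<Delta> + L * \<Delta>
        = 2 * (L / 2 * (1 + sn) * \<beta>\<^sup>2 * K + L / 2) * \<Delta> + 2 * ((1 + sn) * K) * (\<epsilon>f / \<Delta>)"
      using Delta_pos by (simp add: E_def field_simps power2_eq_square)
    finally show ?thesis by simp
  qed
  moreover have "norm (z - x) \<le> \<Delta>" if "z \<in> cball x \<Delta>" for z
    using that by (simp add: dist_norm norm_minus_commute)
  ultimately show ?thesis
    using affine_model_error[OF deriv lip \<open>0 \<le> L\<close> coeff_errors]
    unfolding K_def sn_def by fastforce
qed

end
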